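(* Let $f$ be an L-additive arithmetic function whose associated completely multiplicative function $h_f$ is nonzero-valued. For an arithmetic function $g$ define its derivative $g'$ by $g'(n)=\frac{g(n)f(n)}{h_f(n)}$ for $n\geq1$. Then for all arithmetic functions $g$ and $h$: (a) $(g+h)'(n)=g'(n)+h'(n)$ for all $n\geq 1$; (b) $(g\ast h)'(n)=(g'\ast h)(n)+(g\ast h')(n)$ for all $n\geq 1$.
   Context: An arithmetic function $f:\mathbb{N}\to\mathbb{C}$ is L-additive if there is a completely multiplicative function $h_f$ such that $f(mn)=f(m)h_f(n)+f(n)h_f(m)$ for all positive integers $m,n$; such an $h_f$ is fixed. $\ast$ is Dirichlet convolution $(F\ast G)(n)=\sum_{d\mid n}F(d)G(n/d)$. *)

theory Defs
  imports Complex_Main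
begin

text \<open>Arithmetic functions are modelled as functions nat => complex; only values at n >= 1 matter.\<close>

definition completely_multiplicative :: "(nat \<Rightarrow> complex) \<Rightarrow> bool" where
  "completely_multiplicative h \<longleftrightarrow> h 1 = 1 \<and> (\<forall>m n. m \<ge> 1 \<longrightarrow> n \<ge> 1 \<longrightarrow> h (m * n) = h m * h n)"

definition L_additive_with :: "(nat \<Rightarrow> complex) \<Rightarrow> (nat \<Rightarrow> complex) \<Rightarrow> bool" where
  "L_additive_with f h \<longleftrightarrow> completely_multiplicative h \<and>
     (\<forall>m n. m \<ge> 1 \<longrightarrow> n \<ge> 1 \<longrightarrow> f (m * n) = f m * h n + f n * h m)"

definition dirichlet_conv :: "(nat \<Rightarrow> complex) \<Rightarrow> (nat \<Rightarrow> complex) \<Rightarrow> nat \<Rightarrow> complex" (infixl "\<star>" 70) where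
  "dirichlet_conv F G n = (\<Sum>d | d dvd n. F d * G (n div d))"

definition L_deriv :: "(nat \<Rightarrow> complex) \<Rightarrow> (nat \<Rightarrow> complex) \<Rightarrow> (nat \<Rightarrow> complex) \<Rightarrow> nat \<Rightarrow> complex" where
  "L_deriv f h g n = g n * f n / h n"

end

theory Submission
  imports Defs
begin

text \<open>Since \<open>h\<^sub>f\<close> is completely multiplicative and nonvanishing, dividing the L-additivity
  law by \<open>h\<^sub>f(mn)\<close> shows that \<open>D = f / h\<^sub>f\<close> is completely additive, and \<open>g' = g D\<close>.
  Multiplication by a completely additive \<open>D\<close> is a derivation of the Dirichlet ring: in
  \<open>(g \<star> h)(n) D(n)\<close> split each term using \<open>D(n) = D(d) + D(n/d)\<close>.\<close>

definition completely_additive :: "(nat \<Rightarrow> complex) \<Rightarrow> bool" where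
  "completely_additive D \<longleftrightarrow> (\<forall>m n. m \<ge> 1 \<longrightarrow> n \<ge> 1 \<longrightarrow> D (m * n) = D m + D n)"

lemma L_additive_div_completely_additive:
  assumes "L_additive_with f h" and "\<And>n. n \<ge> 1 \<Longrightarrow> h n \<noteq> 0"
  shows "completely_additive (\<lambda>n. f n / h n)"
  unfolding completely_additive_def
proof (intro allI impI)
  fix m n :: nat
  assume "m \<ge> 1" "n \<ge> 1"
  moreover have "h (m * n) = h m * h n" "f (m * n) = f m * h n + f n * h m"
    using assms(1) \<open>m \<ge> 1\<close> \<open>n \<ge> 1\<close>
    unfolding L_additive_with_def completely_multiplicative_def by auto
  ultimately show "f (m * n) / h (m * n) = f m / h m + f n / h n"
    using assms(2) by (simp add: field_simps)
qed

lemma dirichlet_conv_mult_completely_additive: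
  assumes "completely_additive D" and "n \<ge> 1"
  shows "(F \<star> G) n * D n = ((\<lambda>k. F k * D k) \<star> G) n + (F \<star> (\<lambda>k. G k * D k)) n"
proof -
  have split: "D n = D d + D (n div d)" if "d dvd n" for d
  proof -
    obtain e where "n = d * e" using \<open>d dvd n\<close> by blast
    with \<open>n \<ge> 1\<close> have "d \<ge> 1" "e \<ge> 1" "n div d = e"
      by (auto simp: Suc_le_eq)
    with \<open>n = d * e\<close> show ?thesis
      using assms(1) unfolding completely_additive_def by simp
  qed
  have "(F \<star> G) n * D n = (\<Sum>d | d dvd n. F d * G (n div d) * (D d + D (n div d)))"
    unfolding dirichlet_conv_def sum_distrib_right by (rule sum.cong) (auto simp: split)
  also have "\<dots> = ((\<lambda>k. F k * D k) \<star> G) n + (F \<star> (\<lambda>k. G k * D k)) n"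
    unfolding dirichlet_conv_def sum.distrib[symmetric] by (rule sum.cong) (auto simp: algebra_simps)
  finally show ?thesis .
qed

lemma L_deriv_eq_mult: "L_deriv f h g = (\<lambda>n. g n * (f n / h n))"
  by (simp add: L_deriv_def fun_eq_iff)

theorem theorem2p7:
  fixes f hf g h :: "nat \<Rightarrow> complex"
  assumes "L_additive_with f hf"
    and "\<And>n. n \<ge> 1 \<Longrightarrow> hf n \<noteq> 0"
  shows "(\<forall>n\<ge>1. L_deriv f hf (\<lambda>k. g k + h k) n = L_deriv f hf g n + L_deriv f hf h n) \<and>
         (\<forall>n\<ge>1. L_deriv f hf (g \<star> h) n = (L_deriv f hf g \<star> h) n + (g \<star> L_deriv f hf h) n)"
proof (intro conjI allI impI)
  fix n :: nat
  show "L_deriv f hf (\<lambda>k. g k + h k) n = L_deriv f hf g n + L_deriv f hf h n"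
    by (simp add: L_deriv_def distrib_right add_divide_distrib)
  assume "n \<ge> 1"
  have "completely_additive (\<lambda>n. f n / hf n)"
    using assms by (rule L_additive_div_completely_additive)
  then show "L_deriv f hf (g \<star> h) n = (L_deriv f hf g \<star> h) n + (g \<star> L_deriv f hf h) n"
    unfolding L_deriv_eq_mult using \<open>n \<ge> 1\<close> by (rule dirichlet_conv_mult_completely_additive)
qed

end
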